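(* Let $A=H+S\in\mathbb{C}^{n,n}$, where $H=H^*$ is positive semidefinite with $H\neq 0$, and $S=-S^*$ with $S\neq 0$. Then there exist a unitary matrix $U\in\mathbb{C}^{n,n}$, an integer $r\geq 2$, and integers $n_1\geq n_2\geq\cdots\geq n_{r-1}>0$ and $n_r\geq 0$ with $n_1+\cdots+n_r=n$, such that, partitioning conformally with the block sizes $n_1,\dots,n_r$, $$U^*HU=\begin{bmatrix} H_{11} & 0\\ 0 & 0\end{bmatrix},\qquad U^*SU=\begin{bmatrix} S_{11} & S_{12} & & & 0\\ S_{21} & S_{22} & \ddots & & 0\\ & \ddots & \ddots & S_{r-2,r-1} & \vdots\\ & & S_{r-1,r-2} & S_{r-1,r-1} & 0\\ 0 & \cdots & \cdots & 0 & S_{r,r}\end{bmatrix},$$ that is, $U^*SU=[S_{ij}]_{i,j=1}^r$ with $S_{ij}\in\mathbb{C}^{n_i,n_j}$, $S_{ij}=0$ whenever $|i-j|>1$, and $S_{i,r}=0$, $S_{r,i}=0$ for all $i<r$; where $H_{11}=H_{11}^*\in\mathbb{C}^{n_1,n_1}$ is positive definite, $S_{ii}=-S_{ii}^*\in\mathbb{C}^{n_i,n_i}$ for $i=1,\dots,r$, and $S_{i,i-1}=-S_{i-1,i}^*=[\Sigma_{i,i-1}\;\,0]\in\mathbb{C}^{n_i,n_{i-1}}$ with $\Sigma_{i,i-1}\in\mathbb{C}^{n_i,n_i}$ nonsingular for $i=2,\dots,r-1$.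
   Context: $M^*$ denotes the conjugate transpose of $M$. A block of size $0$ is understood to be absent. *)

theory Defs
  imports "Jordan_Normal_Form.Schur_Decomposition" "Jordan_Normal_Form.Determinant"
begin

(* M^* is mat_adjoint M (conjugate transpose, from Jordan_Normal_Form). *)

definition hermitian_mat :: "complex mat \<Rightarrow> bool" where
  "hermitian_mat M \<longleftrightarrow> square_mat M \<and> mat_adjoint M = M"

definition skew_hermitian_mat :: "complex mat \<Rightarrow> bool" where
  "skew_hermitian_mat M \<longleftrightarrow> square_mat M \<and> mat_adjoint M = - M"

definition unitary_mat :: "complex mat \<Rightarrow> bool" where
  "unitary_mat U \<longleftrightarrow> square_mat U \<and> mat_adjoint U * U = 1\<^sub>m (dim_row U)"

definition psd_mat :: "complex mat \<Rightarrow> bool" where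
  "psd_mat M \<longleftrightarrow> hermitian_mat M \<and>
     (\<forall>v \<in> carrier_vec (dim_row M). Re (conjugate v \<bullet> (M *\<^sub>v v)) \<ge> 0)"

definition pd_mat :: "complex mat \<Rightarrow> bool" where
  "pd_mat M \<longleftrightarrow> hermitian_mat M \<and>
     (\<forall>v \<in> carrier_vec (dim_row M). v \<noteq> 0\<^sub>v (dim_row M) \<longrightarrow>
        Re (conjugate v \<bullet> (M *\<^sub>v v)) > 0)"

(* block partitioning with block sizes ns (0-based block indices) *)
definition blk_off :: "nat list \<Rightarrow> nat \<Rightarrow> nat" where
  "blk_off ns i = sum_list (take i ns)"

definition blk :: "'a mat \<Rightarrow> nat list \<Rightarrow> nat \<Rightarrow> nat \<Rightarrow> 'a mat" where
  "blk M ns i j = mat (ns ! i) (ns ! j) (\<lambda>(a, b). M $$ (blk_off ns i + a, blk_off ns j + b))"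

(* horizontal concatenation [A B] of matrices with the same number of rows *)
definition append_cols :: "'a::zero mat \<Rightarrow> 'a mat \<Rightarrow> 'a mat" where
  "append_cols A B = four_block_mat A B (0\<^sub>m 0 (dim_col A)) (0\<^sub>m 0 (dim_col B))"

end

(*
  Compressing the columns of H by a unitary W, H W = [X 0] with X injective, and using that
  W^* H W is Hermitian gives W^* H W = diag(H11, 0); H11 is positive definite because a positive
  semidefinite matrix annihilates every vector on which its quadratic form vanishes.

  Write the correspondingly transformed S as [[A, B], [C, D]]. Unitary changes of basis inside the
  two diagonal blocks keep H in this form and bring C to [[Sigma, 0], [0, 0]] with Sigma
  nonsingular of size p <= k; induction on the size of D, with leading block size p, produces the
  remaining blocks of the staircase. Only the blocks below the diagonal are constructed, those
  above follow from skew-Hermitian symmetry.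
*)

theory Submission
  imports Defs
begin

lemma uminus_zero_mat [simp]: "- (0\<^sub>m n m :: 'a :: group_add mat) = 0\<^sub>m n m"
  by (rule eq_matI) auto

lemma mult_mat_vec_zero [simp]: "A \<in> carrier_mat n m \<Longrightarrow> A *\<^sub>v 0\<^sub>v m = 0\<^sub>v n"
  by (rule eq_vecI) auto

lemma dim_append_cols [simp]:
  "dim_row (append_cols A B) = dim_row A" "dim_col (append_cols A B) = dim_col A + dim_col B"
  unfolding append_cols_def by auto

lemma index_append_cols:
  "i < dim_row A \<Longrightarrow> j < dim_col A + dim_col B \<Longrightarrow>
    append_cols A B $$ (i, j) = (if j < dim_col A then A $$ (i, j) else B $$ (i, j - dim_col A))"
  unfolding append_cols_def by auto

lemma append_cols_zero_empty:
  "A \<in> carrier_mat n m \<Longrightarrow> append_cols A (0\<^sub>m n 0) = A"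
  by (rule eq_matI) (auto simp: index_append_cols)

lemma append_cols_zero_assoc:
  "A \<in> carrier_mat n m \<Longrightarrow> append_cols (append_cols A (0\<^sub>m n a)) (0\<^sub>m n b) = append_cols A (0\<^sub>m n (a + b))"
  by (rule eq_matI) (auto simp: index_append_cols)

lemma mult_append_cols:
  assumes A: "A \<in> carrier_mat n k" and X: "X \<in> carrier_mat k p" and Z: "Z \<in> carrier_mat k q"
  shows "A * append_cols X Z = append_cols (A * X) (A * Z)"
proof (rule eq_matI)
  fix i j assume "i < dim_row (append_cols (A * X) (A * Z))" "j < dim_col (append_cols (A * X) (A * Z))"
  moreover have "col (append_cols X Z) j = (if j < p then col X j else col Z (j - p))" if "j < p + q" for j
    by (rule eq_vecI) (use that X Z in \<open>auto simp: index_append_cols\<close>)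
  ultimately show "(A * append_cols X Z) $$ (i, j) = append_cols (A * X) (A * Z) $$ (i, j)"
    using A X Z by (simp add: index_append_cols)
qed (use A X Z in auto)

lemma append_cols_append_rows_zero:
  "A \<in> carrier_mat a p \<Longrightarrow>
    append_cols (A @\<^sub>r 0\<^sub>m b p) (0\<^sub>m (a + b) q) = four_block_mat A (0\<^sub>m a q) (0\<^sub>m b p) (0\<^sub>m b q)"
  by (rule eq_matI) (auto simp: index_append_cols append_rows_def)

lemma dim_mat_adjoint [simp]:
  fixes A :: "complex mat"
  shows "dim_row (mat_adjoint A) = dim_col A" "dim_col (mat_adjoint A) = dim_row A"
  unfolding mat_adjoint_def by auto

lemma mat_adjoint_carrier_mat [simp, intro]:
  "(A :: complex mat) \<in> carrier_mat n m \<Longrightarrow> mat_adjoint A \<in> carrier_mat m n"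
  unfolding carrier_mat_def by simp

lemma index_mat_adjoint [simp]:
  "i < dim_col A \<Longrightarrow> j < dim_row A \<Longrightarrow> mat_adjoint A $$ (i, j) = cnj ((A :: complex mat) $$ (j, i))"
  unfolding mat_adjoint_def by (simp add: mat_of_rows_index)

lemma mat_adjoint_mat_adjoint [simp]: "mat_adjoint (mat_adjoint A) = (A :: complex mat)"
  by (rule eq_matI) auto

lemma mat_adjoint_zero [simp]: "mat_adjoint (0\<^sub>m n m :: complex mat) = 0\<^sub>m m n"
  by (rule eq_matI) auto

lemma mat_adjoint_one [simp]: "mat_adjoint (1\<^sub>m n :: complex mat) = 1\<^sub>m n"
  by (rule eq_matI) auto

lemma mat_adjoint_mult:
  fixes A B :: "complex mat"
  assumes "A \<in> carrier_mat n k" "B \<in> carrier_mat k m"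
  shows "mat_adjoint (A * B) = mat_adjoint B * mat_adjoint A"
  by (rule eq_matI) (use assms in \<open>auto simp: scalar_prod_def mult.commute\<close>)

lemma mat_adjoint_four_block_mat:
  fixes A B C D :: "complex mat"
  assumes "A \<in> carrier_mat n1 m1" "D \<in> carrier_mat n2 m2"
    "B \<in> carrier_mat n1 m2" "C \<in> carrier_mat n2 m1"
  shows "mat_adjoint (four_block_mat A B C D) =
    four_block_mat (mat_adjoint A) (mat_adjoint C) (mat_adjoint B) (mat_adjoint D)"
  by (rule eq_matI) (use assms in auto)

lemma mat_adjoint_append_cols:
  fixes A B :: "complex mat"
  assumes "A \<in> carrier_mat n m1" "B \<in> carrier_mat n m2"
  shows "mat_adjoint (append_cols A B) = mat_adjoint A @\<^sub>r mat_adjoint B"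
  unfolding append_cols_def append_rows_def using assms
  by (subst mat_adjoint_four_block_mat) auto

lemma scalar_prod_mat_adjoint:
  fixes A :: "complex mat"
  assumes "A \<in> carrier_mat n m" "v \<in> carrier_vec m" "w \<in> carrier_vec n"
  shows "conjugate v \<bullet> (mat_adjoint A *\<^sub>v w) = conjugate (A *\<^sub>v v) \<bullet> w"
proof -
  have "conjugate v \<bullet> (mat_adjoint A *\<^sub>v w) =
      (\<Sum>i = 0..<m. \<Sum>j = 0..<n. cnj (v $ i) * cnj (A $$ (j, i)) * w $ j)"
    using assms by (simp add: scalar_prod_def sum_distrib_left mult.assoc)
  also have "\<dots> = (\<Sum>j = 0..<n. \<Sum>i = 0..<m. cnj (v $ i) * cnj (A $$ (j, i)) * w $ j)"
    by (rule sum.swap)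
  also have "\<dots> = conjugate (A *\<^sub>v v) \<bullet> w"
    using assms by (simp add: scalar_prod_def sum_distrib_right sum_distrib_left mult_ac)
  finally show ?thesis .
qed

lemma unitary_matD:
  assumes "unitary_mat U" "U \<in> carrier_mat n n"
  shows "mat_adjoint U * U = 1\<^sub>m n" "U * mat_adjoint U = 1\<^sub>m n"
proof -
  show UU: "mat_adjoint U * U = 1\<^sub>m n"
    using assms unfolding unitary_mat_def by auto
  show "U * mat_adjoint U = 1\<^sub>m n"
    by (rule mat_mult_left_right_inverse[OF _ _ UU]) (use assms in auto)
qed

lemma unitary_matI: "U \<in> carrier_mat n n \<Longrightarrow> mat_adjoint U * U = 1\<^sub>m n \<Longrightarrow> unitary_mat U"
  unfolding unitary_mat_def by auto

lemma unitary_mat_one: "unitary_mat (1\<^sub>m n)"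
  by (rule unitary_matI[of _ n]) auto

lemma unitary_mat_mult:
  assumes U: "unitary_mat U" "U \<in> carrier_mat n n" and V: "unitary_mat V" "V \<in> carrier_mat n n"
  shows "unitary_mat (U * V)"
proof (rule unitary_matI)
  have "mat_adjoint (U * V) * (U * V) = mat_adjoint V * (mat_adjoint U * (U * V))"
    using U V by (simp add: mat_adjoint_mult[of _ n n] assoc_mult_mat[of _ n n _ n _ n])
  also have "mat_adjoint U * (U * V) = V"
    using U V by (simp add: assoc_mult_mat[of _ n n _ n _ n, symmetric] unitary_matD)
  finally show "mat_adjoint (U * V) * (U * V) = 1\<^sub>m n"
    using V by (simp add: unitary_matD)
qed (use U V in auto)

lemma unitary_mat_four_block_diag:
  assumes U: "unitary_mat U" "U \<in> carrier_mat n n" and V: "unitary_mat V" "V \<in> carrier_mat m m"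
  shows "unitary_mat (four_block_mat U (0\<^sub>m n m) (0\<^sub>m m n) V)"
proof (rule unitary_matI)
  show "mat_adjoint (four_block_mat U (0\<^sub>m n m) (0\<^sub>m m n) V) * four_block_mat U (0\<^sub>m n m) (0\<^sub>m m n) V
    = 1\<^sub>m (n + m)"
    using U V by (simp add: mat_adjoint_four_block_mat[of _ n n _ m m] unitary_matD
        mult_four_block_mat[of "mat_adjoint U" n n _ m _ m _ U n _ m])
qed (use U V in auto)

lemma det_mat_adjoint_unitary_nonzero:
  assumes "unitary_mat U" "U \<in> carrier_mat n n"
  shows "det (mat_adjoint U) \<noteq> 0"
proof -
  have "det (mat_adjoint U) * det U = 1"
    using assms by (simp add: det_mult[symmetric, of _ n] unitary_matD)
  then show ?thesis by auto
qed

lemma unitary_equivalence_inverse: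
  assumes W: "unitary_mat W" "W \<in> carrier_mat m m" and Q: "unitary_mat Q" "Q \<in> carrier_mat k k"
    and C: "C \<in> carrier_mat m k"
  shows "W * (mat_adjoint W * C * Q) * mat_adjoint Q = C"
proof -
  have "W * (mat_adjoint W * C * Q) = (W * mat_adjoint W) * (C * Q)"
    using W Q C by (simp add: assoc_mult_mat[of _ m m _ k _ k] assoc_mult_mat[of _ m m _ m _ k])
  also have "\<dots> * mat_adjoint Q = C * (Q * mat_adjoint Q)"
    using W Q C by (simp add: unitary_matD assoc_mult_mat[of _ m k _ k _ k])
  finally show ?thesis
    using Q C by (simp add: unitary_matD)
qed

lemma adjoint_mult_mult_assoc:
  fixes U V M Q R :: "complex mat"
  assumes U: "U \<in> carrier_mat m m'" and V: "V \<in> carrier_mat m' m''" and M: "M \<in> carrier_mat m k"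
    and Q: "Q \<in> carrier_mat k k'" and R: "R \<in> carrier_mat k' k''"
  shows "mat_adjoint (U * V) * M * (Q * R) = mat_adjoint V * (mat_adjoint U * M * Q) * R"
proof -
  have Ua: "mat_adjoint U \<in> carrier_mat m' m" and Va: "mat_adjoint V \<in> carrier_mat m'' m'"
    using U V by auto
  have UM: "mat_adjoint U * M \<in> carrier_mat m' k"
    using Ua M by auto
  have "mat_adjoint (U * V) * M * (Q * R) = mat_adjoint V * (mat_adjoint U * M) * (Q * R)"
    using assoc_mult_mat[OF Va Ua M] by (simp add: mat_adjoint_mult[OF U V])
  also have "\<dots> = mat_adjoint V * (mat_adjoint U * M * (Q * R))"
    using assoc_mult_mat[OF Va UM mult_carrier_mat[OF Q R]] .
  also have "mat_adjoint U * M * (Q * R) = mat_adjoint U * M * Q * R"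
    using assoc_mult_mat[OF UM Q R] by simp
  finally show ?thesis
    using assoc_mult_mat[OF Va mult_carrier_mat[OF UM Q] R] by simp
qed

definition inj_mat :: "complex mat \<Rightarrow> bool" where
  "inj_mat X \<longleftrightarrow>
    (\<forall>v \<in> carrier_vec (dim_col X). X *\<^sub>v v = 0\<^sub>v (dim_row X) \<longrightarrow> v = 0\<^sub>v (dim_col X))"

lemma inj_matD:
  "inj_mat X \<Longrightarrow> X \<in> carrier_mat a b \<Longrightarrow> v \<in> carrier_vec b \<Longrightarrow> X *\<^sub>v v = 0\<^sub>v a \<Longrightarrow> v = 0\<^sub>v b"
  unfolding inj_mat_def by auto

lemma inj_matI:
  assumes "X \<in> carrier_mat a b" "\<And>v. v \<in> carrier_vec b \<Longrightarrow> X *\<^sub>v v = 0\<^sub>v a \<Longrightarrow> v = 0\<^sub>v b"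
  shows "inj_mat X"
  using assms unfolding inj_mat_def by auto

text \<open>Padding the rows of \<open>X\<close> with zero rows gives a singular square matrix when \<open>a < b\<close>;
  a kernel vector of that matrix is a kernel vector of \<open>X\<close>.\<close>

lemma inj_mat_le:
  assumes X: "X \<in> carrier_mat a b" and inj: "inj_mat X"
  shows "b \<le> a"
proof (rule ccontr)
  assume "\<not> b \<le> a"
  define M where "M = mat\<^sub>r b b (\<lambda>i. if i = b - 1 then 0\<^sub>v b else if i < a then row X i else 0\<^sub>v b)"
  have M: "M \<in> carrier_mat b b"
    unfolding M_def by simp
  have "det M = 0"
    unfolding M_def by (rule det_row_0) (use \<open>\<not> b \<le> a\<close> X in auto)
  then obtain v where v: "v \<in> carrier_vec b" "v \<noteq> 0\<^sub>v b" "M *\<^sub>v v = 0\<^sub>v b"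
    using det_0_iff_vec_prod_zero[OF M] by auto
  have "X *\<^sub>v v = 0\<^sub>v a"
  proof (rule eq_vecI)
    fix i assume "i < dim_vec (0\<^sub>v a :: complex vec)"
    then have "(M *\<^sub>v v) $ i = row X i \<bullet> v"
      using \<open>\<not> b \<le> a\<close> X unfolding M_def by auto
    then show "(X *\<^sub>v v) $ i = 0\<^sub>v a $ i"
      using v \<open>i < dim_vec (0\<^sub>v a)\<close> \<open>\<not> b \<le> a\<close> X by (simp add: index_mult_mat_vec)
  qed (use X in auto)
  then show False
    using inj_matD[OF inj X v(1)] v(2) by simp
qed

lemma inj_mat_det:
  "X \<in> carrier_mat a a \<Longrightarrow> inj_mat X \<Longrightarrow> det X \<noteq> 0"
  using det_0_iff_vec_prod_zero[of X a] unfolding inj_mat_def by auto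

lemma inj_mat_mult:
  assumes A: "A \<in> carrier_mat a b" "inj_mat A" and B: "B \<in> carrier_mat b c" "inj_mat B"
  shows "inj_mat (A * B)"
proof (rule inj_matI)
  fix v :: "complex vec" assume v: "v \<in> carrier_vec c" and "(A * B) *\<^sub>v v = 0\<^sub>v a"
  then have "A *\<^sub>v (B *\<^sub>v v) = 0\<^sub>v a"
    using A B by (simp add: assoc_mult_mat_vec)
  then show "v = 0\<^sub>v c"
    using inj_matD[OF A(2,1)] inj_matD[OF B(2,1) v] A B v by simp
qed (use A B in auto)

lemma inj_mat_of_left_inverse:
  assumes A: "A \<in> carrier_mat a b" and B: "B \<in> carrier_mat b a" and BA: "B * A = 1\<^sub>m b"
  shows "inj_mat A"
proof (rule inj_matI[OF A])
  fix v :: "complex vec" assume v: "v \<in> carrier_vec b" and "A *\<^sub>v v = 0\<^sub>v a"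
  then have "(B * A) *\<^sub>v v = 0\<^sub>v b"
    using A B by (simp add: assoc_mult_mat_vec)
  then show "v = 0\<^sub>v b"
    using v B by (simp add: BA)
qed

lemma unitary_mat_inj:
  assumes "unitary_mat U" "U \<in> carrier_mat n n"
  shows "inj_mat U" "inj_mat (mat_adjoint U)"
  using assms by (auto intro: inj_mat_of_left_inverse[of _ n n] simp: unitary_matD)

lemma inj_mat_append_rows_zero:
  assumes A: "A \<in> carrier_mat a c" and inj: "inj_mat (A @\<^sub>r 0\<^sub>m b c)"
  shows "inj_mat A"
proof (rule inj_matI[OF A])
  fix v :: "complex vec" assume v: "v \<in> carrier_vec c" and "A *\<^sub>v v = 0\<^sub>v a"
  then have "(A @\<^sub>r 0\<^sub>m b c) *\<^sub>v v = 0\<^sub>v (a + b)"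
    using A v by (subst mat_mult_append[OF A _ v]) auto
  then show "v = 0\<^sub>v c"
    using inj_matD[OF inj carrier_append_rows[OF A zero_carrier_mat] v] by simp
qed

section \<open>Congruence and definiteness\<close>

lemma mat_adjoint_congruence:
  fixes M U :: "complex mat"
  assumes M: "M \<in> carrier_mat n n" and U: "U \<in> carrier_mat n k"
  shows "mat_adjoint (mat_adjoint U * M * U) = mat_adjoint U * mat_adjoint M * U"
proof -
  have Ua: "mat_adjoint U \<in> carrier_mat k n"
    using U by simp
  have "mat_adjoint (mat_adjoint U * M * U) = mat_adjoint U * mat_adjoint (mat_adjoint U * M)"
    using mat_adjoint_mult[OF mult_carrier_mat[OF Ua M] U] .
  also have "\<dots> = mat_adjoint U * mat_adjoint M * U"
    using mat_adjoint_mult[OF Ua M] assoc_mult_mat[OF Ua mat_adjoint_carrier_mat[OF M] U] by simp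
  finally show ?thesis .
qed

lemma hermitian_mat_congruence:
  assumes "M \<in> carrier_mat n n" "hermitian_mat M" "U \<in> carrier_mat n k"
  shows "hermitian_mat (mat_adjoint U * M * U)"
  using assms by (auto simp: hermitian_mat_def mat_adjoint_congruence)

lemma skew_hermitian_mat_congruence:
  assumes "M \<in> carrier_mat n n" "skew_hermitian_mat M" "U \<in> carrier_mat n k"
  shows "skew_hermitian_mat (mat_adjoint U * M * U)"
  using assms by (auto simp: skew_hermitian_mat_def mat_adjoint_congruence)

lemma quadratic_form_congruence:
  fixes M U :: "complex mat"
  assumes M: "M \<in> carrier_mat n n" and U: "U \<in> carrier_mat n k" and v: "v \<in> carrier_vec k"
  shows "conjugate v \<bullet> ((mat_adjoint U * M * U) *\<^sub>v v) = conjugate (U *\<^sub>v v) \<bullet> (M *\<^sub>v (U *\<^sub>v v))"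
proof -
  have "(mat_adjoint U * M * U) *\<^sub>v v = mat_adjoint U *\<^sub>v (M *\<^sub>v (U *\<^sub>v v))"
    using assoc_mult_mat_vec[OF mult_carrier_mat[OF mat_adjoint_carrier_mat[OF U] M] U v]
      assoc_mult_mat_vec[OF mat_adjoint_carrier_mat[OF U] M mult_mat_vec_carrier[OF U v]] by simp
  then show ?thesis
    using scalar_prod_mat_adjoint[OF U v mult_mat_vec_carrier[OF M mult_mat_vec_carrier[OF U v]]] by simp
qed

lemma psd_mat_congruence:
  assumes M: "M \<in> carrier_mat n n" "psd_mat M" and U: "U \<in> carrier_mat n k"
  shows "psd_mat (mat_adjoint U * M * U)"
  using assms hermitian_mat_congruence[OF M(1) _ U]
  by (auto simp: psd_mat_def quadratic_form_congruence)

lemma pd_mat_congruence: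
  assumes M: "M \<in> carrier_mat n n" "pd_mat M" and U: "U \<in> carrier_mat n k" "inj_mat U"
  shows "pd_mat (mat_adjoint U * M * U)"
  unfolding pd_mat_def
proof (intro conjI ballI impI)
  show "hermitian_mat (mat_adjoint U * M * U)"
    using M U by (auto intro: hermitian_mat_congruence simp: pd_mat_def)
  fix v :: "complex vec" assume "v \<in> carrier_vec (dim_row (mat_adjoint U * M * U))"
    and "v \<noteq> 0\<^sub>v (dim_row (mat_adjoint U * M * U))"
  then have v: "v \<in> carrier_vec k" "v \<noteq> 0\<^sub>v k"
    using U by auto
  then have "U *\<^sub>v v \<noteq> 0\<^sub>v n"
    using inj_matD[OF U(2,1)] by auto
  then show "0 < Re (conjugate v \<bullet> ((mat_adjoint U * M * U) *\<^sub>v v))"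
    using M U v by (auto simp: pd_mat_def quadratic_form_congruence)
qed

lemma four_block_diag_congruence:
  fixes A B C D Q W :: "complex mat"
  assumes A: "A \<in> carrier_mat k k" and B: "B \<in> carrier_mat k m" and C: "C \<in> carrier_mat m k"
    and D: "D \<in> carrier_mat m m" and Q: "Q \<in> carrier_mat k k" and W: "W \<in> carrier_mat m m"
  shows "mat_adjoint (four_block_mat Q (0\<^sub>m k m) (0\<^sub>m m k) W) * four_block_mat A B C D *
      four_block_mat Q (0\<^sub>m k m) (0\<^sub>m m k) W =
    four_block_mat (mat_adjoint Q * A * Q) (mat_adjoint Q * B * W) (mat_adjoint W * C * Q) (mat_adjoint W * D * W)"
proof -
  have [simp]: "mat_adjoint Q * A \<in> carrier_mat k k" "mat_adjoint Q * B \<in> carrier_mat k m"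
    "mat_adjoint W * C \<in> carrier_mat m k" "mat_adjoint W * D \<in> carrier_mat m m"
    "mat_adjoint Q * A * Q \<in> carrier_mat k k" "mat_adjoint Q * B * W \<in> carrier_mat k m"
    "mat_adjoint W * C * Q \<in> carrier_mat m k" "mat_adjoint W * D * W \<in> carrier_mat m m"
    using A B C D Q W by auto
  have "mat_adjoint (four_block_mat Q (0\<^sub>m k m) (0\<^sub>m m k) W) * four_block_mat A B C D =
      four_block_mat (mat_adjoint Q * A) (mat_adjoint Q * B) (mat_adjoint W * C) (mat_adjoint W * D)"
    using A B C D Q W
    by (simp add: mat_adjoint_four_block_mat[OF Q W] mult_four_block_mat[of _ k k _ m _ m _ _ k _ m])
  then show ?thesis
    using A B C D Q W by (simp add: mult_four_block_mat[of _ k k _ m _ m _ _ k _ m])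
qed

lemma hermitian_quadratic_form_shift:
  assumes M: "M \<in> carrier_mat n n" "hermitian_mat M" and x: "x \<in> carrier_vec n"
  defines "y \<equiv> M *\<^sub>v x"
  shows "Re (conjugate (x + complex_of_real t \<cdot>\<^sub>v y) \<bullet> (M *\<^sub>v (x + complex_of_real t \<cdot>\<^sub>v y))) =
    Re (conjugate x \<bullet> (M *\<^sub>v x)) + 2 * t * Re (y \<bullet>c y) + t\<^sup>2 * Re (conjugate y \<bullet> (M *\<^sub>v y))"
proof -
  have y: "y \<in> carrier_vec n"
    unfolding y_def using M x by auto
  have yy: "conjugate y \<bullet> y = y \<bullet>c y"
    using comm_scalar_prod[OF carrier_vec_conjugate[OF y] y] by simp
  have xMy: "conjugate x \<bullet> (M *\<^sub>v y) = y \<bullet>c y"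
    using scalar_prod_mat_adjoint[OF M(1) x y] M yy by (auto simp: y_def hermitian_mat_def)
  have "M *\<^sub>v (x + complex_of_real t \<cdot>\<^sub>v y) = y + complex_of_real t \<cdot>\<^sub>v (M *\<^sub>v y)"
    unfolding y_def using M x y by (simp add: mult_add_distrib_mat_vec[of _ n n] mult_mat_vec[of _ n n])
  moreover have "conjugate (x + complex_of_real t \<cdot>\<^sub>v y) = conjugate x + complex_of_real t \<cdot>\<^sub>v conjugate y"
    by (simp add: conjugate_add_vec[of _ n] conjugate_smult_vec x y)
  ultimately have "conjugate (x + complex_of_real t \<cdot>\<^sub>v y) \<bullet> (M *\<^sub>v (x + complex_of_real t \<cdot>\<^sub>v y)) =
      conjugate x \<bullet> y + t * (conjugate x \<bullet> (M *\<^sub>v y)) + t * (conjugate y \<bullet> y + t * (conjugate y \<bullet> (M *\<^sub>v y)))"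
    using x y M
    by (simp add: add_scalar_prod_distrib[of _ n] scalar_prod_add_distrib[of _ n]
        smult_scalar_prod_distrib[of _ n] scalar_prod_smult_distrib[of _ n] algebra_simps)
  then show ?thesis
    unfolding xMy yy y_def[symmetric] by (simp add: power2_eq_square algebra_simps)
qed

lemma quadratic_nonneg_imp_linear_coeff_zero:
  fixes a c :: real
  assumes a: "0 \<le> a" and c: "0 \<le> c" and nonneg: "\<And>t. 0 \<le> 2 * t * a + t\<^sup>2 * c"
  shows "a = 0"
proof (rule ccontr)
  assume "a \<noteq> 0"
  with a have "a > 0"
    by simp
  define t where "t = - a / (c + 1)"
  have "t < 0"
    using \<open>a > 0\<close> c by (simp add: t_def)
  moreover have "- a \<le> t * c"
    using \<open>a > 0\<close> c by (simp add: t_def field_simps)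
  ultimately have "t * (2 * a + t * c) < 0"
    using \<open>a > 0\<close> by (intro mult_neg_pos) auto
  then show False
    using nonneg[of t] by (simp add: algebra_simps power2_eq_square)
qed

lemma mat_adjoint_four_block_diag_mult_zero_blocks:
  fixes Q W \<Sigma> :: "complex mat"
  assumes Q: "Q \<in> carrier_mat p p" and W: "W \<in> carrier_mat r r" and \<Sigma>: "\<Sigma> \<in> carrier_mat p q"
  shows "mat_adjoint (four_block_mat Q (0\<^sub>m p r) (0\<^sub>m r p) W) * four_block_mat \<Sigma> (0\<^sub>m p s) (0\<^sub>m r q) (0\<^sub>m r s) =
    four_block_mat (mat_adjoint Q * \<Sigma>) (0\<^sub>m p s) (0\<^sub>m r q) (0\<^sub>m r s)"
  using Q W \<Sigma> mult_carrier_mat[OF mat_adjoint_carrier_mat[OF Q] \<Sigma>]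
  by (simp add: mat_adjoint_four_block_mat[OF Q W] mult_four_block_mat[of _ p p _ r _ r _ _ q _ s])

text \<open>If \<open>x\<^sup>* M x = 0\<close> and \<open>y = M x\<close>, the quadratic form at \<open>x + t y\<close> is
  \<open>2 t |y|\<^sup>2 + t\<^sup>2 y\<^sup>* M y\<close>; nonnegativity for all real \<open>t\<close> forces \<open>y = 0\<close>.\<close>

lemma psd_quadratic_form_zero:
  assumes M: "M \<in> carrier_mat n n" "psd_mat M" and x: "x \<in> carrier_vec n"
    and zero: "Re (conjugate x \<bullet> (M *\<^sub>v x)) = 0"
  shows "M *\<^sub>v x = 0\<^sub>v n"
proof -
  define y where "y = M *\<^sub>v x"
  have y: "y \<in> carrier_vec n"
    unfolding y_def using M x by auto
  have yy: "0 \<le> Re (y \<bullet>c y)" "Im (y \<bullet>c y) = 0"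
    using conjugate_square_ge_0_vec[of y] by (auto simp: less_eq_complex_def)
  have "Re (y \<bullet>c y) = 0"
  proof (rule quadratic_nonneg_imp_linear_coeff_zero[OF yy(1)])
    show "0 \<le> Re (conjugate y \<bullet> (M *\<^sub>v y))"
      using M y by (auto simp: psd_mat_def)
    fix t :: real
    have "x + complex_of_real t \<cdot>\<^sub>v y \<in> carrier_vec (dim_row M)"
      using M x y by simp
    then have "0 \<le> Re (conjugate (x + complex_of_real t \<cdot>\<^sub>v y) \<bullet> (M *\<^sub>v (x + complex_of_real t \<cdot>\<^sub>v y)))"
      using M(2) unfolding psd_mat_def by blast
    moreover have "hermitian_mat M"
      using M(2) by (simp add: psd_mat_def)
    ultimately show "0 \<le> 2 * t * Re (y \<bullet>c y) + t\<^sup>2 * Re (conjugate y \<bullet> (M *\<^sub>v y))"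
      using hermitian_quadratic_form_shift[OF M(1) _ x, of t] zero unfolding y_def by simp
  qed
  then have "y \<bullet>c y = 0"
    using yy(2) by (simp add: complex_eq_iff)
  then have "y = 0\<^sub>v n"
    by (rule iffD1[OF conjugate_square_eq_0_vec[OF y]])
  then show ?thesis
    unfolding y_def .
qed

lemma pd_mat_of_psd_inj:
  assumes M: "M \<in> carrier_mat n n" "psd_mat M" "inj_mat M"
  shows "pd_mat M"
  unfolding pd_mat_def
proof (intro conjI ballI impI)
  show "hermitian_mat M"
    using M by (simp add: psd_mat_def)
  fix v :: "complex vec" assume "v \<in> carrier_vec (dim_row M)" "v \<noteq> 0\<^sub>v (dim_row M)"
  then have v: "v \<in> carrier_vec n" "v \<noteq> 0\<^sub>v n"
    using M(1) by auto
  then have "M *\<^sub>v v \<noteq> 0\<^sub>v n"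
    using inj_matD[OF M(3,1)] by blast
  then have "Re (conjugate v \<bullet> (M *\<^sub>v v)) \<noteq> 0"
    using psd_quadratic_form_zero[OF M(1,2) v(1)] by blast
  moreover have "0 \<le> Re (conjugate v \<bullet> (M *\<^sub>v v))"
    using M v unfolding psd_mat_def by auto
  ultimately show "0 < Re (conjugate v \<bullet> (M *\<^sub>v v))"
    by linarith
qed

lemma psd_mat_four_block_upper_left:
  assumes A: "A \<in> carrier_mat k k" and B: "B \<in> carrier_mat k l" and C: "C \<in> carrier_mat l k"
    and D: "D \<in> carrier_mat l l" and psd: "psd_mat (four_block_mat A B C D)"
  shows "psd_mat A"
  unfolding psd_mat_def hermitian_mat_def
proof (intro conjI ballI)
  have herm: "mat_adjoint (four_block_mat A B C D) = four_block_mat A B C D"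
    using psd by (simp add: psd_mat_def hermitian_mat_def)
  show "mat_adjoint A = A"
  proof (rule eq_matI)
    fix i j assume "i < dim_row A" "j < dim_col A"
    then show "mat_adjoint A $$ (i, j) = A $$ (i, j)"
      using arg_cong[OF herm, of "\<lambda>M. M $$ (i, j)"] A D by simp
  qed (use A in auto)
  fix v :: "complex vec" assume "v \<in> carrier_vec (dim_row A)"
  then have v: "v \<in> carrier_vec k"
    using A by simp
  have "conjugate (v @\<^sub>v 0\<^sub>v l) = conjugate v @\<^sub>v 0\<^sub>v l"
    by (rule eq_vecI) auto
  then have form: "conjugate (v @\<^sub>v 0\<^sub>v l) \<bullet> (four_block_mat A B C D *\<^sub>v (v @\<^sub>v 0\<^sub>v l)) =
      conjugate v \<bullet> (A *\<^sub>v v)"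
    using A B C D v by (simp add: four_block_mat_mult_vec[OF A B C D v] scalar_prod_append[of _ k _ l])
  have "v @\<^sub>v 0\<^sub>v l \<in> carrier_vec (dim_row (four_block_mat A B C D))"
    using A D v by simp
  then show "0 \<le> Re (conjugate v \<bullet> (A *\<^sub>v v))"
    using psd unfolding psd_mat_def form[symmetric] by blast
qed (use A in auto)

section \<open>Unitary column compression\<close>

lemma unitary_mat_of_cols:
  assumes us: "set us \<subseteq> carrier_vec m" "length us = m"
    and orthonormal: "\<And>i j. i < m \<Longrightarrow> j < m \<Longrightarrow> us ! i \<bullet>c us ! j = (if i = j then 1 else 0)"
  shows "unitary_mat (mat_of_cols m us)"
proof (rule unitary_matI)
  show Q: "mat_of_cols m us \<in> carrier_mat m m"
    using us by auto
  show "mat_adjoint (mat_of_cols m us) * mat_of_cols m us = 1\<^sub>m m"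
  proof (rule eq_matI)
    fix i j assume "i < dim_row (1\<^sub>m m :: complex mat)" "j < dim_col (1\<^sub>m m :: complex mat)"
    then have ij: "i < m" "j < m"
      by auto
    then have "(mat_adjoint (mat_of_cols m us) * mat_of_cols m us) $$ (i, j) = us ! j \<bullet>c us ! i"
      using us by (simp add: mat_adjoint_def comm_scalar_prod[of _ m] subsetD)
    then show "(mat_adjoint (mat_of_cols m us) * mat_of_cols m us) $$ (i, j) = 1\<^sub>m m $$ (i, j)"
      using orthonormal[OF ij(2,1)] ij by auto
  qed (use Q in auto)
qed

definition vec_normalize :: "complex vec \<Rightarrow> complex vec" where
  "vec_normalize w = complex_of_real (1 / sqrt (Re (w \<bullet>c w))) \<cdot>\<^sub>v w"

lemma corthogonal_vec_normalize:
  fixes ws :: "complex vec list"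
  assumes orth: "corthogonal ws" and ws: "set ws \<subseteq> carrier_vec m"
    and i: "i < length ws" and j: "j < length ws"
  shows "vec_normalize (ws ! i) \<bullet>c vec_normalize (ws ! j) = (if i = j then 1 else 0)"
proof (cases "i = j")
  case True
  define w where "w = ws ! i"
  have "0 \<le> w \<bullet>c w" "w \<bullet>c w \<noteq> 0"
    using corthogonalD[OF orth i i] unfolding w_def by auto
  define r where "r = Re (w \<bullet>c w)"
  have r: "w \<bullet>c w = complex_of_real r" "r > 0"
    using \<open>0 \<le> w \<bullet>c w\<close> \<open>w \<bullet>c w \<noteq> 0\<close> by (auto simp: complex_eq_iff less_eq_complex_def r_def)
  have "vec_normalize w \<bullet>c vec_normalize w = 1"
    unfolding vec_normalize_def using r by (simp add: conjugate_smult_vec of_real_mult[symmetric])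
  then show ?thesis
    using True by (simp add: w_def)
next
  case False
  have "ws ! i \<in> carrier_vec m" "ws ! j \<in> carrier_vec m"
    using ws i j by auto
  then show ?thesis
    using corthogonalD[OF orth i j] False
    by (simp add: vec_normalize_def conjugate_smult_vec smult_scalar_prod_distrib[of _ m]
        scalar_prod_smult_distrib[of _ m])
qed

text \<open>Gram-Schmidt applied to a basis starting with \<open>v\<close>, normalised; the list is reversed so that
  the multiple of \<open>v\<close> becomes the last column.\<close>

lemma unitary_completion:
  fixes v :: "complex vec"
  assumes v: "v \<in> carrier_vec m" and v0: "v \<noteq> 0\<^sub>v m"
  shows "\<exists>Q c. Q \<in> carrier_mat m m \<and> unitary_mat Q \<and> col Q (m - 1) = c \<cdot>\<^sub>v v"
proof -
  interpret cof_vec_space m "TYPE(complex)" .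
  define ws where "ws = gram_schmidt m (basis_completion v)"
  note bc = basis_completion[OF v v0]
  note gs = gram_schmidt_result[OF bc(2,4,5) ws_def]
  have len: "length ws = m"
    using gs bc by simp
  have "0 < m"
    using v v0 by (cases m) auto
  have "hd ws = v"
    using bc(6,7) v \<open>0 < m\<close> unfolding ws_def by (cases "basis_completion v") auto
  then have ws0: "ws ! 0 = v"
    using len \<open>0 < m\<close> by (cases ws) auto
  define us where "us = rev (map vec_normalize ws)"
  have us: "set us \<subseteq> carrier_vec m" "length us = m"
    using gs(3) len by (auto simp: us_def vec_normalize_def)
  have us_nth: "us ! i = vec_normalize (ws ! (m - 1 - i))" if "i < m" for i
    using that len by (simp add: us_def rev_nth)
  have "unitary_mat (mat_of_cols m us)"
  proof (rule unitary_mat_of_cols[OF us])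
    fix i j assume ij: "i < m" "j < m"
    then have "m - 1 - i < length ws" "m - 1 - j < length ws" "m - 1 - i = m - 1 - j \<longleftrightarrow> i = j"
      using len by auto
    then show "us ! i \<bullet>c us ! j = (if i = j then 1 else 0)"
      using corthogonal_vec_normalize[OF gs(2,3), of "m - 1 - i" "m - 1 - j"] us_nth ij by simp
  qed
  moreover have "col (mat_of_cols m us) (m - 1) = complex_of_real (1 / sqrt (Re (v \<bullet>c v))) \<cdot>\<^sub>v v"
    using \<open>0 < m\<close> us us_nth[of "m - 1"] ws0 v by (subst col_mat_of_cols) (auto simp: vec_normalize_def)
  moreover have "mat_of_cols m us \<in> carrier_mat m m"
    using mat_of_cols_carrier(1)[of m us] us(2) by simp
  ultimately show ?thesis
    by blast
qed

text \<open>A kernel vector of \<open>B\<close> is moved into the last column of a unitary change of basis.\<close>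

lemma column_compression_step:
  assumes B: "B \<in> carrier_mat k (Suc m)" and v: "v \<in> carrier_vec (Suc m)" "v \<noteq> 0\<^sub>v (Suc m)"
    and Bv: "B *\<^sub>v v = 0\<^sub>v k"
  shows "\<exists>Q B1. Q \<in> carrier_mat (Suc m) (Suc m) \<and> unitary_mat Q \<and> B1 \<in> carrier_mat k m \<and>
    B * Q = append_cols B1 (0\<^sub>m k 1)"
proof -
  obtain Q c where Q: "Q \<in> carrier_mat (Suc m) (Suc m)" "unitary_mat Q" and Qm: "col Q m = c \<cdot>\<^sub>v v"
    using unitary_completion[OF v] by auto
  have "col (B * Q) m = B *\<^sub>v col Q m"
    using col_mult2[OF B Q(1)] by simp
  also have "\<dots> = c \<cdot>\<^sub>v (B *\<^sub>v v)"
    unfolding Qm by (rule mult_mat_vec[OF B v(1)])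
  also have "\<dots> = 0\<^sub>v k"
    unfolding Bv by (rule eq_vecI) auto
  finally have last: "col (B * Q) m = 0\<^sub>v k" .
  define B1 where "B1 = mat k m (\<lambda>(i, j). (B * Q) $$ (i, j))"
  have "B * Q = append_cols B1 (0\<^sub>m k 1)"
  proof (rule eq_matI)
    fix i j assume "i < dim_row (append_cols B1 (0\<^sub>m k 1))" "j < dim_col (append_cols B1 (0\<^sub>m k 1))"
    then have ij: "i < k" "j < Suc m"
      by (auto simp: B1_def)
    show "(B * Q) $$ (i, j) = append_cols B1 (0\<^sub>m k 1) $$ (i, j)"
    proof (cases "j < m")
      case False
      then have "j = m"
        using ij by simp
      then show ?thesis
        using arg_cong[OF last, of "\<lambda>w. w $ i"] ij B Q by (simp add: index_append_cols B1_def)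
    qed (use ij B Q in \<open>simp add: index_append_cols B1_def\<close>)
  qed (use B Q in \<open>auto simp: B1_def\<close>)
  then show ?thesis
    using Q by (intro exI[of _ Q] exI[of _ B1]) (auto simp: B1_def)
qed

lemma column_compression:
  assumes "B \<in> carrier_mat k m"
  shows "\<exists>W p X. W \<in> carrier_mat m m \<and> unitary_mat W \<and> p \<le> m \<and> X \<in> carrier_mat k p \<and> inj_mat X \<and>
     B * W = append_cols X (0\<^sub>m k (m - p))"
  using assms
proof (induction m arbitrary: B)
  case 0
  then show ?case
    by (intro exI[of _ "1\<^sub>m 0"] exI[of _ 0] exI[of _ B])
      (auto simp: unitary_mat_one append_cols_zero_empty inj_mat_def)
next
  case (Suc m B)
  show ?case
  proof (cases "inj_mat B")
    case True
    then show ?thesis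
      using Suc.prems
      by (intro exI[of _ "1\<^sub>m (Suc m)"] exI[of _ "Suc m"] exI[of _ B])
        (auto simp: unitary_mat_one append_cols_zero_empty)
  next
    case False
    then obtain v where "v \<in> carrier_vec (Suc m)" "v \<noteq> 0\<^sub>v (Suc m)" "B *\<^sub>v v = 0\<^sub>v k"
      using Suc.prems unfolding inj_mat_def by auto
    then obtain Q B1 where Q: "Q \<in> carrier_mat (Suc m) (Suc m)" "unitary_mat Q"
      and B1: "B1 \<in> carrier_mat k m" and BQ: "B * Q = append_cols B1 (0\<^sub>m k 1)"
      using column_compression_step[OF Suc.prems] by blast
    obtain W1 p X where W1: "W1 \<in> carrier_mat m m" "unitary_mat W1" and p: "p \<le> m"
      and X: "X \<in> carrier_mat k p" "inj_mat X" and B1W1: "B1 * W1 = append_cols X (0\<^sub>m k (m - p))"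
      using Suc.IH[OF B1] by blast
    define D where "D = four_block_mat W1 (0\<^sub>m m 1) (0\<^sub>m 1 m) (1\<^sub>m 1)"
    have D: "D \<in> carrier_mat (Suc m) (Suc m)" "unitary_mat D"
      unfolding D_def using W1 unitary_mat_four_block_diag[OF W1(2,1) unitary_mat_one] by auto
    define W where "W = Q * D"
    have W: "W \<in> carrier_mat (Suc m) (Suc m)" "unitary_mat W"
      unfolding W_def using Q D unitary_mat_mult[OF Q(2,1) D(2,1)] by auto
    have "B * W = append_cols B1 (0\<^sub>m k 1) * D"
      unfolding W_def BQ[symmetric] using assoc_mult_mat[OF Suc.prems Q(1) D(1)] by simp
    also have "\<dots> = append_cols (B1 * W1) (0\<^sub>m k 1)"
      unfolding append_cols_def D_def using B1 W1
      by (simp add: mult_four_block_mat[of _ k m _ 1 _ 0 _ _ m _ 1])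
    also have "\<dots> = append_cols X (0\<^sub>m k (Suc m - p))"
      unfolding B1W1 using append_cols_zero_assoc[OF X(1), of "m - p" 1] p by (simp add: Suc_diff_le)
    finally show ?thesis
      using W X p by (intro exI[of _ W] exI[of _ p] exI[of _ X]) auto
  qed
qed

text \<open>Compressing the columns of \<open>C\<close> and then those of the adjoint of the resulting injective
  block gives a square injective core.\<close>

lemma unitary_rank_normal_form:
  fixes C :: "complex mat"
  assumes C: "C \<in> carrier_mat m k" and C0: "C \<noteq> 0\<^sub>m m k"
  shows "\<exists>W Q p \<Sigma>. W \<in> carrier_mat m m \<and> unitary_mat W \<and> Q \<in> carrier_mat k k \<and> unitary_mat Q \<and>
    0 < p \<and> p \<le> m \<and> p \<le> k \<and> \<Sigma> \<in> carrier_mat p p \<and> det \<Sigma> \<noteq> 0 \<and>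
    mat_adjoint W * C * Q = four_block_mat \<Sigma> (0\<^sub>m p (k - p)) (0\<^sub>m (m - p) p) (0\<^sub>m (m - p) (k - p))"
proof -
  obtain Q p X where Q: "Q \<in> carrier_mat k k" "unitary_mat Q" and p: "p \<le> k"
    and X: "X \<in> carrier_mat m p" "inj_mat X" and CQ: "C * Q = append_cols X (0\<^sub>m m (k - p))"
    using column_compression[OF C] by blast
  obtain W q Y where W: "W \<in> carrier_mat m m" "unitary_mat W" and q: "q \<le> m"
    and Y: "Y \<in> carrier_mat p q" "inj_mat Y" and XW: "mat_adjoint X * W = append_cols Y (0\<^sub>m p (m - q))"
    using column_compression[OF mat_adjoint_carrier_mat[OF X(1)]] by blast
  have WX: "mat_adjoint W * X = mat_adjoint Y @\<^sub>r 0\<^sub>m (m - q) p"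
    using arg_cong[OF XW, of mat_adjoint] X W Y
    by (simp add: mat_adjoint_mult[of _ p m] mat_adjoint_append_cols[OF Y(1) zero_carrier_mat])
  have "inj_mat (mat_adjoint W * X)"
    using W X by (intro inj_mat_mult[of _ m m _ p]) (auto simp: unitary_mat_inj)
  then have inj: "inj_mat (mat_adjoint Y)"
    using WX Y by (auto intro: inj_mat_append_rows_zero[of _ q p])
  have "p = q"
    using inj_mat_le[OF mat_adjoint_carrier_mat[OF Y(1)] inj] inj_mat_le[OF Y] by simp
  have "mat_adjoint W * C * Q = mat_adjoint W * append_cols X (0\<^sub>m m (k - p))"
    using W C Q by (simp add: assoc_mult_mat[of _ m m _ k _ k] CQ)
  also have "\<dots> = append_cols (mat_adjoint W * X) (0\<^sub>m m (k - p))"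
    using mult_append_cols[OF mat_adjoint_carrier_mat[OF W(1)] X(1) zero_carrier_mat] W by simp
  also have "\<dots> = four_block_mat (mat_adjoint Y) (0\<^sub>m p (k - p)) (0\<^sub>m (m - p) p) (0\<^sub>m (m - p) (k - p))"
    using append_cols_append_rows_zero[of "mat_adjoint Y" p p "m - p" "k - p"] Y W q
    by (simp add: WX \<open>p = q\<close>)
  finally have normal_form: "mat_adjoint W * C * Q =
      four_block_mat (mat_adjoint Y) (0\<^sub>m p (k - p)) (0\<^sub>m (m - p) p) (0\<^sub>m (m - p) (k - p))" .
  have "0 < p"
  proof (rule ccontr)
    assume "\<not> 0 < p"
    then have "mat_adjoint W * C * Q = 0\<^sub>m m k"
      unfolding normal_form using Y \<open>p = q\<close> by (intro eq_matI) auto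
    then show False
      using unitary_equivalence_inverse[OF W(2,1) Q(2,1) C] C0 W Q by simp
  qed
  moreover have "mat_adjoint Y \<in> carrier_mat p p" "det (mat_adjoint Y) \<noteq> 0"
    using Y inj_mat_det[OF _ inj, of p] \<open>p = q\<close> by auto
  ultimately show ?thesis
    using W Q p q normal_form \<open>p = q\<close> by blast
qed

lemma hermitian_append_cols_zero:
  assumes Y: "Y \<in> carrier_mat n k" and k: "k \<le> n"
    and herm: "hermitian_mat (append_cols Y (0\<^sub>m n (n - k)))"
  shows "Y = mat k k (\<lambda>(i, j). Y $$ (i, j)) @\<^sub>r 0\<^sub>m (n - k) k"
proof (rule eq_matI)
  fix i j assume "i < dim_row (mat k k (\<lambda>(i, j). Y $$ (i, j)) @\<^sub>r 0\<^sub>m (n - k) k)"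
    "j < dim_col (mat k k (\<lambda>(i, j). Y $$ (i, j)) @\<^sub>r 0\<^sub>m (n - k) k)"
  then have ij: "i < n" "j < k"
    using k by (auto simp: append_rows_def)
  have "mat_adjoint (append_cols Y (0\<^sub>m n (n - k))) $$ (i, j) = append_cols Y (0\<^sub>m n (n - k)) $$ (i, j)"
    using herm by (simp add: hermitian_mat_def)
  then have "k \<le> i \<Longrightarrow> Y $$ (i, j) = 0"
    using ij Y k by (simp add: index_append_cols)
  then show "Y $$ (i, j) = (mat k k (\<lambda>(i, j). Y $$ (i, j)) @\<^sub>r 0\<^sub>m (n - k) k) $$ (i, j)"
    using ij k by (auto simp: append_rows_def)
qed (use Y k in \<open>auto simp: append_rows_def\<close>)

lemma psd_unitary_reduction:
  assumes H: "H \<in> carrier_mat n n" "psd_mat H" and H0: "H \<noteq> 0\<^sub>m n n"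
  shows "\<exists>U k H11. U \<in> carrier_mat n n \<and> unitary_mat U \<and> 0 < k \<and> k \<le> n \<and>
    H11 \<in> carrier_mat k k \<and> pd_mat H11 \<and>
    mat_adjoint U * H * U = four_block_mat H11 (0\<^sub>m k (n - k)) (0\<^sub>m (n - k) k) (0\<^sub>m (n - k) (n - k))"
proof -
  obtain W k X where W: "W \<in> carrier_mat n n" "unitary_mat W" and k: "k \<le> n"
    and X: "X \<in> carrier_mat n k" "inj_mat X" and HW: "H * W = append_cols X (0\<^sub>m n (n - k))"
    using column_compression[OF H(1)] by blast
  define Y where "Y = mat_adjoint W * X"
  have Y: "Y \<in> carrier_mat n k" "inj_mat Y"
    unfolding Y_def using W X by (auto intro: inj_mat_mult simp: unitary_mat_inj)
  have "mat_adjoint W * H * W = mat_adjoint W * append_cols X (0\<^sub>m n (n - k))"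
    using W H by (simp add: assoc_mult_mat[of _ n n _ n _ n] HW)
  also have "\<dots> = append_cols Y (0\<^sub>m n (n - k))"
    unfolding Y_def using mult_append_cols[OF mat_adjoint_carrier_mat[OF W(1)] X(1) zero_carrier_mat] W
    by simp
  finally have G: "mat_adjoint W * H * W = append_cols Y (0\<^sub>m n (n - k))" .
  have psd: "psd_mat (append_cols Y (0\<^sub>m n (n - k)))"
    using psd_mat_congruence[OF H W(1)] unfolding G .
  define H11 where "H11 = mat k k (\<lambda>(i, j). Y $$ (i, j))"
  have H11: "H11 \<in> carrier_mat k k"
    unfolding H11_def by simp
  have Y_rows: "Y = H11 @\<^sub>r 0\<^sub>m (n - k) k"
    unfolding H11_def by (rule hermitian_append_cols_zero[OF Y(1) k]) (use psd in \<open>simp add: psd_mat_def\<close>)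
  have block: "append_cols Y (0\<^sub>m n (n - k)) = four_block_mat H11 (0\<^sub>m k (n - k)) (0\<^sub>m (n - k) k) (0\<^sub>m (n - k) (n - k))"
    using append_cols_append_rows_zero[OF H11, of "n - k" "n - k"] k by (simp add: Y_rows)
  have "pd_mat H11"
  proof (rule pd_mat_of_psd_inj[OF H11])
    show "psd_mat H11"
      using psd_mat_four_block_upper_left[OF H11 zero_carrier_mat zero_carrier_mat zero_carrier_mat]
        psd[unfolded block] by blast
    show "inj_mat H11"
      using inj_mat_append_rows_zero[OF H11] Y(2) by (simp add: Y_rows)
  qed
  moreover have "0 < k"
  proof (rule ccontr)
    assume "\<not> 0 < k"
    then have "mat_adjoint W * H * W = 0\<^sub>m n n"
      using G Y(1) by (intro eq_matI) (auto simp: index_append_cols)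
    then have "H = 0\<^sub>m n n"
      using unitary_equivalence_inverse[OF W(2,1) W(2,1) H(1)] W by simp
    then show False
      using H0 by simp
  qed
  ultimately show ?thesis
    using W k H11 G[unfolded block] by blast
qed

section \<open>Block partitions and the staircase form\<close>

lemma blk_off_0 [simp]: "blk_off ns 0 = 0"
  unfolding blk_off_def by simp

lemma blk_off_Cons_Suc [simp]: "blk_off (k # ns) (Suc i) = k + blk_off ns i"
  unfolding blk_off_def by simp

lemma blk_off_nth_le_sum_list: "i < length ns \<Longrightarrow> blk_off ns i + ns ! i \<le> sum_list ns"
proof (induction ns arbitrary: i)
  case (Cons a ns i)
  then show ?case
    by (cases i) auto
qed simp

lemma blk_off_mono: "i < j \<Longrightarrow> j < length ns \<Longrightarrow> blk_off ns i + ns ! i \<le> blk_off ns j"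
proof (induction ns arbitrary: i j)
  case (Cons a ns i j)
  then obtain j' where j: "j = Suc j'"
    by (cases j) auto
  then show ?case
    using Cons by (cases i) auto
qed simp

lemma dim_blk [simp]: "dim_row (blk M ns i j) = ns ! i" "dim_col (blk M ns i j) = ns ! j"
  unfolding blk_def by auto

lemma index_blk [simp]:
  "a < ns ! i \<Longrightarrow> b < ns ! j \<Longrightarrow> blk M ns i j $$ (a, b) = M $$ (blk_off ns i + a, blk_off ns j + b)"
  unfolding blk_def by auto

lemma blk_mat_adjoint:
  fixes M :: "complex mat"
  assumes "M \<in> carrier_mat N N" "sum_list ns = N" "i < length ns" "j < length ns"
  shows "blk (mat_adjoint M) ns i j = mat_adjoint (blk M ns j i)"
proof (rule eq_matI)
  fix a b assume "a < dim_row (mat_adjoint (blk M ns j i))" "b < dim_col (mat_adjoint (blk M ns j i))"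
  moreover have "blk_off ns i + ns ! i \<le> N" "blk_off ns j + ns ! j \<le> N"
    using assms blk_off_nth_le_sum_list by auto
  ultimately show "blk (mat_adjoint M) ns i j $$ (a, b) = mat_adjoint (blk M ns j i) $$ (a, b)"
    using assms by simp
qed auto

lemma blk_uminus:
  "blk (- M) ns i j = - blk M ns i j" if "M \<in> carrier_mat N N" "sum_list ns = N" "i < length ns" "j < length ns"
proof (rule eq_matI)
  fix a b assume "a < dim_row (- blk M ns i j)" "b < dim_col (- blk M ns i j)"
  moreover have "blk_off ns i + ns ! i \<le> N" "blk_off ns j + ns ! j \<le> N"
    using that blk_off_nth_le_sum_list by auto
  ultimately show "blk (- M) ns i j $$ (a, b) = (- blk M ns i j) $$ (a, b)"
    using that by simp
qed auto

lemma blk_four_block_mat_0_0: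
  "A \<in> carrier_mat k k \<Longrightarrow> ns ! 0 = k \<Longrightarrow> blk (four_block_mat A B C D) ns 0 0 = A"
  by (rule eq_matI) auto

lemma blk_four_block_mat_Suc_Suc:
  assumes A: "A \<in> carrier_mat k k" and D: "D \<in> carrier_mat m m" and sum: "sum_list ns = m"
    and i: "i < length ns" and j: "j < length ns"
  shows "blk (four_block_mat A B C D) (k # ns) (Suc i) (Suc j) = blk D ns i j"
proof (rule eq_matI)
  fix a b assume "a < dim_row (blk D ns i j)" "b < dim_col (blk D ns i j)"
  moreover have "blk_off ns i + ns ! i \<le> m" "blk_off ns j + ns ! j \<le> m"
    using blk_off_nth_le_sum_list[OF i] blk_off_nth_le_sum_list[OF j] sum by auto
  ultimately show "blk (four_block_mat A B C D) (k # ns) (Suc i) (Suc j) $$ (a, b) = blk D ns i j $$ (a, b)"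
    using A D by simp
qed auto

lemma blk_four_block_mat_Suc_0:
  fixes A B D \<Sigma> :: "'a :: zero mat"
  assumes A: "A \<in> carrier_mat k k" and D: "D \<in> carrier_mat m m" and \<Sigma>: "\<Sigma> \<in> carrier_mat p p"
    and pk: "p \<le> k" and ns0: "ns ! 0 = p" and sum: "sum_list ns = m" and i: "i < length ns"
  defines "C \<equiv> four_block_mat \<Sigma> (0\<^sub>m p (k - p)) (0\<^sub>m (m - p) p) (0\<^sub>m (m - p) (k - p))"
  shows "blk (four_block_mat A B C D) (k # ns) (Suc i) 0 =
    (if i = 0 then append_cols \<Sigma> (0\<^sub>m p (k - p)) else 0\<^sub>m (ns ! i) k)"
proof (cases "i = 0")
  case True
  then have "p \<le> m"
    using blk_off_nth_le_sum_list[OF i] ns0 sum by simp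
  then show ?thesis
    using True A D \<Sigma> pk ns0 by (intro eq_matI) (auto simp: C_def index_append_cols)
next
  case False
  then have "p \<le> blk_off ns i" "blk_off ns i + ns ! i \<le> m"
    using blk_off_mono[of 0 i ns] blk_off_nth_le_sum_list[OF i] i ns0 sum by auto
  then show ?thesis
    using False A D \<Sigma> pk by (intro eq_matI) (auto simp: C_def)
qed

definition lower_staircase :: "'a :: comm_ring_1 mat \<Rightarrow> nat list \<Rightarrow> bool" where
  "lower_staircase S ns \<longleftrightarrow> (let r = length ns in
     2 \<le> r \<and>
     (\<forall>i j. i \<le> j \<and> j < r - 1 \<longrightarrow> ns ! j \<le> ns ! i) \<and>
     (\<forall>i < r - 1. 0 < ns ! i) \<and>
     (\<forall>i < r. \<forall>j < i. j + 1 < i \<or> i = r - 1 \<longrightarrow> blk S ns i j = 0\<^sub>m (ns ! i) (ns ! j)) \<and>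
     (\<forall>i. 1 \<le> i \<and> i < r - 1 \<longrightarrow> (\<exists>\<Sigma>. \<Sigma> \<in> carrier_mat (ns ! i) (ns ! i) \<and> det \<Sigma> \<noteq> 0 \<and>
        blk S ns i (i - 1) = append_cols \<Sigma> (0\<^sub>m (ns ! i) (ns ! (i - 1) - ns ! i)))))"

lemma lower_staircase_two_blocks:
  assumes "0 < k" "A \<in> carrier_mat k k" "D \<in> carrier_mat m m"
  shows "lower_staircase (four_block_mat A B (0\<^sub>m m k) D) [k, m]"
proof -
  have "blk (four_block_mat A B (0\<^sub>m m k) D) [k, m] 1 0 = 0\<^sub>m m k"
    using assms by (intro eq_matI) (auto simp: blk_off_def)
  then show ?thesis
    using assms by (auto simp: lower_staircase_def less_Suc_eq)
qed

lemma lower_staircase_Cons: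
  fixes A B D \<Sigma> :: "'a :: comm_ring_1 mat"
  assumes A: "A \<in> carrier_mat k k" and D: "D \<in> carrier_mat m m"
    and \<Sigma>: "\<Sigma> \<in> carrier_mat p p" "det \<Sigma> \<noteq> 0" and pk: "p \<le> k"
    and st: "lower_staircase D ns" and ns0: "ns ! 0 = p" and sum: "sum_list ns = m"
  defines "C \<equiv> four_block_mat \<Sigma> (0\<^sub>m p (k - p)) (0\<^sub>m (m - p) p) (0\<^sub>m (m - p) (k - p))"
  shows "lower_staircase (four_block_mat A B C D) (k # ns)"
proof -
  define S where "S = four_block_mat A B C D"
  define r where "r = length ns"
  have r: "2 \<le> r"
    and mono: "\<And>i j. i \<le> j \<Longrightarrow> j < r - 1 \<Longrightarrow> ns ! j \<le> ns ! i"
    and pos: "\<And>i. i < r - 1 \<Longrightarrow> 0 < ns ! i"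
    and zero: "\<And>i j. i < r \<Longrightarrow> j < i \<Longrightarrow> j + 1 < i \<or> i = r - 1 \<Longrightarrow> blk D ns i j = 0\<^sub>m (ns ! i) (ns ! j)"
    and sub: "\<And>i. 1 \<le> i \<Longrightarrow> i < r - 1 \<Longrightarrow> \<exists>\<Sigma>. \<Sigma> \<in> carrier_mat (ns ! i) (ns ! i) \<and> det \<Sigma> \<noteq> 0 \<and>
        blk D ns i (i - 1) = append_cols \<Sigma> (0\<^sub>m (ns ! i) (ns ! (i - 1) - ns ! i))"
    using st unfolding lower_staircase_def Let_def r_def by blast+
  have SS: "blk S (k # ns) (Suc i) (Suc j) = blk D ns i j" if "i < r" "j < r" for i j
    unfolding S_def using blk_four_block_mat_Suc_Suc[OF A D sum] that by (simp add: r_def)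
  have S0: "blk S (k # ns) (Suc i) 0 = (if i = 0 then append_cols \<Sigma> (0\<^sub>m p (k - p)) else 0\<^sub>m (ns ! i) k)"
    if "i < r" for i
    unfolding S_def C_def using blk_four_block_mat_Suc_0[OF A D \<Sigma>(1) pk ns0 sum] that by (simp add: r_def)
  show ?thesis
    unfolding S_def[symmetric] lower_staircase_def Let_def length_Cons r_def[symmetric]
  proof (intro conjI allI impI)
    show "2 \<le> Suc r"
      using r by simp
  next
    fix i j assume ij: "i \<le> j \<and> j < Suc r - 1"
    show "(k # ns) ! j \<le> (k # ns) ! i"
    proof (cases j)
      case (Suc j')
      then have "j' < r - 1"
        using ij by arith
      then show ?thesis
        using mono[of 0 j'] mono[of "i - 1" j'] ns0 pk ij Suc by (cases i) auto
    qed (use ij in simp)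
  next
    fix i assume "i < Suc r - 1"
    then show "0 < (k # ns) ! i"
      using pos[of 0] pos r ns0 pk by (cases i) auto
  next
    fix i j assume "i < Suc r" "j < i" "j + 1 < i \<or> i = Suc r - 1"
    then show "blk S (k # ns) i j = 0\<^sub>m ((k # ns) ! i) ((k # ns) ! j)"
      using S0[of "i - 1"] SS[of "i - 1" "j - 1"] zero[of "i - 1" "j - 1"] r
      by (cases i; cases j) auto
  next
    fix i assume i: "1 \<le> i \<and> i < Suc r - 1"
    show "\<exists>\<Sigma>. \<Sigma> \<in> carrier_mat ((k # ns) ! i) ((k # ns) ! i) \<and> det \<Sigma> \<noteq> 0 \<and>
        blk S (k # ns) i (i - 1) = append_cols \<Sigma> (0\<^sub>m ((k # ns) ! i) ((k # ns) ! (i - 1) - (k # ns) ! i))"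
    proof (cases "i = 1")
      case True
      then show ?thesis
        using S0[of 0] \<Sigma> ns0 r by auto
    next
      case False
      then obtain i' where "i = Suc (Suc i')"
        using i by (cases i; cases "i - 1") auto
      then show ?thesis
        using sub[of "Suc i'"] SS[of "Suc i'" i'] i by auto
    qed
  qed
qed

lemma staircase_reduction:
  fixes S :: "complex mat"
  assumes "0 < k" "S \<in> carrier_mat (k + m) (k + m)"
  shows "\<exists>Q W ns. Q \<in> carrier_mat k k \<and> unitary_mat Q \<and> W \<in> carrier_mat m m \<and> unitary_mat W \<and>
    ns ! 0 = k \<and> sum_list ns = k + m \<and>
    lower_staircase (mat_adjoint (four_block_mat Q (0\<^sub>m k m) (0\<^sub>m m k) W) * S *
      four_block_mat Q (0\<^sub>m k m) (0\<^sub>m m k) W) ns"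
  using assms
proof (induction m arbitrary: k S rule: less_induct)
  case (less m k S)
  obtain A B C D where "split_block S k k = (A, B, C, D)"
    by (cases "split_block S k k")
  from split_block[OF this, of m m] less.prems
  have A: "A \<in> carrier_mat k k" and B: "B \<in> carrier_mat k m" and C: "C \<in> carrier_mat m k"
    and D: "D \<in> carrier_mat m m" and S: "S = four_block_mat A B C D"
    by auto
  show ?case
  proof (cases "C = 0\<^sub>m m k")
    case True
    have "1\<^sub>m (k + m) * S * 1\<^sub>m (k + m) = S"
      using less.prems(2) by simp
    then have "lower_staircase (mat_adjoint (four_block_mat (1\<^sub>m k) (0\<^sub>m k m) (0\<^sub>m m k) (1\<^sub>m m)) * S *
      four_block_mat (1\<^sub>m k) (0\<^sub>m k m) (0\<^sub>m m k) (1\<^sub>m m)) [k, m]"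
      using lower_staircase_two_blocks[OF less.prems(1) A D] True S by simp
    then show ?thesis
      by (intro exI[of _ "1\<^sub>m k"] exI[of _ "1\<^sub>m m"] exI[of _ "[k, m]"]) (simp add: unitary_mat_one)
  next
    case False
    obtain W1 Q1 p \<Sigma> where W1: "W1 \<in> carrier_mat m m" "unitary_mat W1"
      and Q1: "Q1 \<in> carrier_mat k k" "unitary_mat Q1" and p: "0 < p" "p \<le> m" "p \<le> k"
      and \<Sigma>: "\<Sigma> \<in> carrier_mat p p" "det \<Sigma> \<noteq> 0"
      and C1: "mat_adjoint W1 * C * Q1 = four_block_mat \<Sigma> (0\<^sub>m p (k - p)) (0\<^sub>m (m - p) p) (0\<^sub>m (m - p) (k - p))"
      using unitary_rank_normal_form[OF C False] by blast
    define D1 where "D1 = mat_adjoint W1 * D * W1"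
    have D1: "D1 \<in> carrier_mat (p + (m - p)) (p + (m - p))"
      unfolding D1_def using W1 D p by auto
    obtain Q2 W2 ns where Q2: "Q2 \<in> carrier_mat p p" "unitary_mat Q2"
      and W2: "W2 \<in> carrier_mat (m - p) (m - p)" "unitary_mat W2" and ns: "ns ! 0 = p" "sum_list ns = m"
      and st: "lower_staircase (mat_adjoint (four_block_mat Q2 (0\<^sub>m p (m - p)) (0\<^sub>m (m - p) p) W2) * D1 *
        four_block_mat Q2 (0\<^sub>m p (m - p)) (0\<^sub>m (m - p) p) W2) ns"
      using less.IH[OF _ p(1) D1] p by auto
    define D2 where "D2 = four_block_mat Q2 (0\<^sub>m p (m - p)) (0\<^sub>m (m - p) p) W2"
    have D2: "D2 \<in> carrier_mat m m" "unitary_mat D2"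
      unfolding D2_def using Q2 W2 p unitary_mat_four_block_diag[OF Q2(2,1) W2(2,1)] by auto
    define W where "W = W1 * D2"
    have W: "W \<in> carrier_mat m m" "unitary_mat W"
      unfolding W_def using W1 D2 unitary_mat_mult[OF W1(2,1) D2(2,1)] by auto
    have "mat_adjoint W1 * C * Q1 \<in> carrier_mat m k"
      using W1 C Q1 by auto
    then have "mat_adjoint W * C * Q1 = mat_adjoint D2 * (mat_adjoint W1 * C * Q1)"
      using adjoint_mult_mult_assoc[OF W1(1) D2(1) C Q1(1) one_carrier_mat] Q1 D2 unfolding W_def
      by (simp add: right_mult_one_mat[OF mult_carrier_mat[OF mat_adjoint_carrier_mat[OF D2(1)]]])
    also have "\<dots> = four_block_mat (mat_adjoint Q2 * \<Sigma>) (0\<^sub>m p (k - p)) (0\<^sub>m (m - p) p) (0\<^sub>m (m - p) (k - p))"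
      unfolding C1 D2_def by (rule mat_adjoint_four_block_diag_mult_zero_blocks[OF Q2(1) W2(1) \<Sigma>(1)])
    finally have WCQ: "mat_adjoint W * C * Q1 = \<dots>" .
    have WDW: "mat_adjoint W * D * W = mat_adjoint D2 * D1 * D2"
      unfolding W_def D1_def by (rule adjoint_mult_mult_assoc[OF W1(1) D2(1) D W1(1) D2(1)])
    have "det (mat_adjoint Q2 * \<Sigma>) \<noteq> 0"
      using Q2 \<Sigma> det_mat_adjoint_unitary_nonzero[OF Q2(2,1)] by (simp add: det_mult[of _ p])
    then have "lower_staircase (four_block_mat (mat_adjoint Q1 * A * Q1) (mat_adjoint Q1 * B * W)
        (mat_adjoint W * C * Q1) (mat_adjoint W * D * W)) (k # ns)"
      unfolding WCQ WDW using Q1 A Q2 \<Sigma> p D2 D1 st[folded D2_def] ns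
      by (intro lower_staircase_Cons) auto
    then show ?thesis
      using four_block_diag_congruence[OF A B C D Q1(1) W(1)] S Q1 W ns
      by (intro exI[of _ Q1] exI[of _ W] exI[of _ "k # ns"]) simp
  qed
qed

lemma skew_hermitian_blk:
  fixes S :: "complex mat"
  assumes S: "S \<in> carrier_mat N N" "skew_hermitian_mat S" and sum: "sum_list ns = N"
    and i: "i < length ns" and j: "j < length ns"
  shows "blk S ns i j = - mat_adjoint (blk S ns j i)"
proof -
  have "S = - mat_adjoint S"
    using S by (simp add: skew_hermitian_mat_def)
  then have "blk S ns i j = blk (- mat_adjoint S) ns i j"
    by simp
  also have "\<dots> = - mat_adjoint (blk S ns j i)"
    using S sum i j by (simp add: blk_uminus[of _ N] blk_mat_adjoint[of _ N])
  finally show ?thesis .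
qed

lemma skew_hermitian_lower_staircase:
  fixes S :: "complex mat"
  assumes S: "S \<in> carrier_mat N N" "skew_hermitian_mat S" and sum: "sum_list ns = N"
    and st: "lower_staircase S ns"
  shows "\<forall>i < length ns. \<forall>j < length ns. i + 1 < j \<or> j + 1 < i \<longrightarrow> blk S ns i j = 0\<^sub>m (ns ! i) (ns ! j)"
    and "\<forall>i < length ns - 1. blk S ns i (length ns - 1) = 0\<^sub>m (ns ! i) (ns ! (length ns - 1)) \<and>
           blk S ns (length ns - 1) i = 0\<^sub>m (ns ! (length ns - 1)) (ns ! i)"
    and "\<forall>i < length ns. skew_hermitian_mat (blk S ns i i)"
    and "\<forall>i. 1 \<le> i \<and> i < length ns \<longrightarrow> blk S ns i (i - 1) = - mat_adjoint (blk S ns (i - 1) i)"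
proof -
  have lower: "blk S ns i j = 0\<^sub>m (ns ! i) (ns ! j)"
    if "i < length ns" "j < i" "j + 1 < i \<or> i = length ns - 1" for i j
    using st that unfolding lower_staircase_def Let_def by blast
  have upper: "blk S ns j i = 0\<^sub>m (ns ! j) (ns ! i)"
    if "i < length ns" "j < i" "j + 1 < i \<or> i = length ns - 1" for i j
    using skew_hermitian_blk[OF S sum, of j i] lower[OF that] that by simp
  show "\<forall>i < length ns. \<forall>j < length ns. i + 1 < j \<or> j + 1 < i \<longrightarrow> blk S ns i j = 0\<^sub>m (ns ! i) (ns ! j)"
  proof (intro allI impI)
    fix i j assume "i < length ns" "j < length ns" "i + 1 < j \<or> j + 1 < i"
    then show "blk S ns i j = 0\<^sub>m (ns ! i) (ns ! j)"
      using lower[of i j] upper[of j i] by auto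
  qed
  show "\<forall>i < length ns - 1. blk S ns i (length ns - 1) = 0\<^sub>m (ns ! i) (ns ! (length ns - 1)) \<and>
      blk S ns (length ns - 1) i = 0\<^sub>m (ns ! (length ns - 1)) (ns ! i)"
  proof (intro allI impI)
    fix i assume "i < length ns - 1"
    then show "blk S ns i (length ns - 1) = 0\<^sub>m (ns ! i) (ns ! (length ns - 1)) \<and>
        blk S ns (length ns - 1) i = 0\<^sub>m (ns ! (length ns - 1)) (ns ! i)"
      using lower[of "length ns - 1" i] upper[of "length ns - 1" i] by auto
  qed
  show "\<forall>i < length ns. skew_hermitian_mat (blk S ns i i)"
  proof (intro allI impI)
    fix i assume "i < length ns"
    then have "- blk S ns i i = mat_adjoint (blk S ns i i)"
      using arg_cong[OF skew_hermitian_blk[OF S sum, of i i], of uminus] by simp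
    then show "skew_hermitian_mat (blk S ns i i)"
      unfolding skew_hermitian_mat_def by simp
  qed
  show "\<forall>i. 1 \<le> i \<and> i < length ns \<longrightarrow> blk S ns i (i - 1) = - mat_adjoint (blk S ns (i - 1) i)"
    by (intro allI impI skew_hermitian_blk[OF S sum]) auto
qed

lemma unitary_staircase_reduction:
  fixes H S :: "complex mat"
  assumes H: "H \<in> carrier_mat n n" "psd_mat H" "H \<noteq> 0\<^sub>m n n" and S: "S \<in> carrier_mat n n"
  shows "\<exists>U k H11 ns. U \<in> carrier_mat n n \<and> unitary_mat U \<and> H11 \<in> carrier_mat k k \<and> pd_mat H11 \<and>
    ns ! 0 = k \<and> sum_list ns = n \<and>
    mat_adjoint U * H * U = four_block_mat H11 (0\<^sub>m k (n - k)) (0\<^sub>m (n - k) k) (0\<^sub>m (n - k) (n - k)) \<and>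
    lower_staircase (mat_adjoint U * S * U) ns"
proof -
  obtain U0 k H0 where U0: "U0 \<in> carrier_mat n n" "unitary_mat U0" and k: "0 < k" "k \<le> n"
    and H0: "H0 \<in> carrier_mat k k" "pd_mat H0"
    and HU0: "mat_adjoint U0 * H * U0 = four_block_mat H0 (0\<^sub>m k (n - k)) (0\<^sub>m (n - k) k) (0\<^sub>m (n - k) (n - k))"
    using psd_unitary_reduction[OF H] by blast
  define m where "m = n - k"
  have n: "n = k + m"
    unfolding m_def using k by simp
  have S0: "mat_adjoint U0 * S * U0 \<in> carrier_mat (k + m) (k + m)"
    using U0 S n by auto
  obtain Q W ns where Q: "Q \<in> carrier_mat k k" "unitary_mat Q" and W: "W \<in> carrier_mat m m" "unitary_mat W"
    and ns: "ns ! 0 = k" "sum_list ns = k + m"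
    and st: "lower_staircase (mat_adjoint (four_block_mat Q (0\<^sub>m k m) (0\<^sub>m m k) W) * (mat_adjoint U0 * S * U0) *
      four_block_mat Q (0\<^sub>m k m) (0\<^sub>m m k) W) ns"
    using staircase_reduction[OF k(1) S0] by blast
  define D where "D = four_block_mat Q (0\<^sub>m k m) (0\<^sub>m m k) W"
  have D: "D \<in> carrier_mat n n" "unitary_mat D"
    unfolding D_def n using Q W unitary_mat_four_block_diag[OF Q(2,1) W(2,1)] by auto
  define U where "U = U0 * D"
  have U: "U \<in> carrier_mat n n" "unitary_mat U"
    unfolding U_def using U0 D unitary_mat_mult[OF U0(2,1) D(2,1)] by auto
  have congruence: "mat_adjoint U * M * U = mat_adjoint D * (mat_adjoint U0 * M * U0) * D"
    if "M \<in> carrier_mat n n" for M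
    unfolding U_def by (rule adjoint_mult_mult_assoc[OF U0(1) D(1) that U0(1) D(1)])
  have "mat_adjoint U * H * U = four_block_mat (mat_adjoint Q * H0 * Q) (0\<^sub>m k m) (0\<^sub>m m k) (0\<^sub>m m m)"
    unfolding congruence[OF H(1)] HU0 D_def m_def[symmetric]
    using four_block_diag_congruence[OF H0(1) zero_carrier_mat zero_carrier_mat zero_carrier_mat Q(1) W(1)] Q W
    by simp
  moreover have "pd_mat (mat_adjoint Q * H0 * Q)"
    using pd_mat_congruence[OF H0 Q(1)] unitary_mat_inj(1)[OF Q(2,1)] by blast
  moreover have "lower_staircase (mat_adjoint U * S * U) ns"
    unfolding congruence[OF S] using st[folded D_def] .
  ultimately show ?thesis
    using U Q H0 ns n by (intro exI[of _ U] exI[of _ k] exI[of _ "mat_adjoint Q * H0 * Q"] exI[of _ ns]) auto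
qed

theorem lemma4p1:
  fixes A H S :: "complex mat" and n :: nat
  assumes "H \<in> carrier_mat n n" and "S \<in> carrier_mat n n"
    and "A = H + S"
    and "psd_mat H" and "H \<noteq> 0\<^sub>m n n"
    and "skew_hermitian_mat S" and "S \<noteq> 0\<^sub>m n n"
  shows "\<exists>U ns. U \<in> carrier_mat n n \<and> unitary_mat U \<and>
     (let r = length ns; H' = mat_adjoint U * H * U; S' = mat_adjoint U * S * U in
       r \<ge> 2 \<and>
       (\<forall>i j. i \<le> j \<and> j < r - 1 \<longrightarrow> ns ! j \<le> ns ! i) \<and>
       (\<forall>i < r - 1. ns ! i > 0) \<and>
       sum_list ns = n \<and>
       H' = four_block_mat (blk H' ns 0 0) (0\<^sub>m (ns ! 0) (n - ns ! 0))
                           (0\<^sub>m (n - ns ! 0) (ns ! 0)) (0\<^sub>m (n - ns ! 0) (n - ns ! 0)) \<and>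
       pd_mat (blk H' ns 0 0) \<and>
       (\<forall>i < r. \<forall>j < r. (i + 1 < j \<or> j + 1 < i) \<longrightarrow>
           blk S' ns i j = 0\<^sub>m (ns ! i) (ns ! j)) \<and>
       (\<forall>i < r - 1. blk S' ns i (r - 1) = 0\<^sub>m (ns ! i) (ns ! (r - 1)) \<and>
                    blk S' ns (r - 1) i = 0\<^sub>m (ns ! (r - 1)) (ns ! i)) \<and>
       (\<forall>i < r. skew_hermitian_mat (blk S' ns i i)) \<and>
       (\<forall>i. 1 \<le> i \<and> i < r - 1 \<longrightarrow>
           blk S' ns i (i - 1) = - mat_adjoint (blk S' ns (i - 1) i) \<and>
           (\<exists>\<Sigma>. \<Sigma> \<in> carrier_mat (ns ! i) (ns ! i) \<and> det \<Sigma> \<noteq> 0 \<and>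
              blk S' ns i (i - 1) = append_cols \<Sigma> (0\<^sub>m (ns ! i) (ns ! (i - 1) - ns ! i)))))"
proof -
  obtain U k H11 ns where U: "U \<in> carrier_mat n n" "unitary_mat U" and H11: "H11 \<in> carrier_mat k k" "pd_mat H11"
    and ns: "ns ! 0 = k" "sum_list ns = n"
    and H': "mat_adjoint U * H * U = four_block_mat H11 (0\<^sub>m k (n - k)) (0\<^sub>m (n - k) k) (0\<^sub>m (n - k) (n - k))"
    and st: "lower_staircase (mat_adjoint U * S * U) ns"
    using unitary_staircase_reduction[OF assms(1,4,5,2)] by blast
  have S': "mat_adjoint U * S * U \<in> carrier_mat n n" "skew_hermitian_mat (mat_adjoint U * S * U)"
    using U assms(2,6) by (auto intro: skew_hermitian_mat_congruence)
  have "blk (mat_adjoint U * H * U) ns 0 0 = H11"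
    unfolding H' using blk_four_block_mat_0_0[OF H11(1) ns(1)] .
  then show ?thesis
    using U H11 ns H' st[unfolded lower_staircase_def Let_def]
      skew_hermitian_lower_staircase[OF S' ns(2) st]
    unfolding Let_def by (intro exI[of _ U] exI[of _ ns]) auto
qed

end
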